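(* Suppose Assumptions (A1)–(A4) hold and let $\mathbf X^{(t)},\mathbf M^{(t)}$ be generated by the EDM algorithm with $\alpha>0$, $\beta\in[0,1)$. Let $\tilde f(\mathbf x)=f(\mathbf x)-f^\star$. Then for every $t\ge0$, $$\mathbb E[\tilde f(\mathbf z^{(t+1)})]\le(1-\alpha\mu)\mathbb E[\tilde f(\mathbf z^{(t)})]-\frac{\alpha(1-\alpha L)}2\mathbb E\|\nabla\bar{\mathbf f}(\mathbf X^{(t)})\|^2+\frac{\alpha L^2}{2n}\mathbb E\|\mathbf X^{(t)}-\overline{\mathbf X}^{(t)}\|_{\mathrm F}^2+\frac{\alpha^3L^2\beta^2}{2(1-\beta)^2}\mathbb E\|\bar{\mathbf m}^{(t-1)}\|^2+\frac{\alpha^2L\sigma^2}{2n}.$$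
   Context: Setting. There are $n$ agents and parameters lie in $\mathbb R^d$. For each agent $i$ there is a data distribution $\mathcal D_i$ and a loss $F_i:\mathbb R^d\times\mathbb R^p\to\mathbb R$; $f_i(\mathbf x)=\mathbb E_{\bm\xi\sim\mathcal D_i}F_i(\mathbf x,\bm\xi)$, $f(\mathbf x)=\frac1n\sum_{i=1}^n f_i(\mathbf x)$, $f^\star=\inf_{\mathbf x}f(\mathbf x)$. For $\mathbf X\in\mathbb R^{n\times d}$ with rows $\mathbf x_1^\top,\dots,\mathbf x_n^\top$: $\nabla\mathbf f(\mathbf X)\in\mathbb R^{n\times d}$ has rows $\nabla f_i(\mathbf x_i)^\top$; for $\bm\Xi=(\bm\xi_1,\dots,\bm\xi_n)$, $\nabla\mathbf F(\mathbf X,\bm\Xi)$ has rows $\nabla F_i(\mathbf x_i,\bm\xi_i)^\top$ (gradients in $\mathbf x$); $\nabla\bar{\mathbf f}(\mathbf X)=\frac1n\sum_i\nabla f_i(\mathbf x_i)\in\mathbb R^d$; $\bar{\mathbf x}=\frac1n\mathbf X^\top\mathbf 1_n$, $\overline{\mathbf X}=\frac1n\mathbf 1_n\mathbf 1_n^\top\mathbf X$; $\mathbf P_{\mathbf I}=\mathbf I-\frac1n\mathbf 1_n\mathbf 1_n^\top$. $\|\cdot\|$ is the Euclidean norm, $\|\cdot\|_{\mathrm F}$ Frobenius, $\|\cdot\|_{\mathrm{op}}$ spectral. (A1) $\mathbf W=(w_{ij})\in\mathbb R^{n\times n}$ is symmetric, doubly stochastic ($\mathbf W\mathbf 1=\mathbf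 1$), has $w_{ii}>0$ for all $i$, nonnegative entries, smallest eigenvalue $>0$, and $\lambda:=\|\mathbf W-\frac1n\mathbf 1\mathbf 1^\top\|_{\mathrm{op}}<1$. (A2) Each $f_i$ is $L$-smooth ($\|\nabla f_i(\mathbf x)-\nabla f_i(\mathbf y)\|\le L\|\mathbf x-\mathbf y\|$) and bounded below. (A3) $\bm\Xi^{(t)}=(\bm\xi_1^{(t)},\dots,\bm\xi_n^{(t)})$ with $\bm\xi_i^{(t)}\sim\mathcal D_i$, all mutually independent over $i$ and $t\ge0$; $\mathcal F^{(t)}$ is the $\sigma$-algebra generated by $\bm\Xi^{(0)},\dots,\bm\Xi^{(t-1)}$; for every $\mathcal F^{(t)}$-measurable random $\mathbf x_i^{(t)}$: $\mathbb E[\nabla F_i(\mathbf x_i^{(t)},\bm\xi_i^{(t)})-\nabla f_i(\mathbf x_i^{(t)})\mid\mathcal F^{(t)}]=0$ and $\mathbb E[\|\nabla F_i(\mathbf x_i^{(t)},\bm\xi_i^{(t)})-\nabla f_i(\mathbf x_i^{(t)})\|^2\mid\mathcal F^{(t)}]\le\sigma^2$. (A4) (Polyak–Łojasiewicz) There is $\mu>0$ with $2\mu(f(\mathbf x)-f^\star)\le\|\nabla f(\mathbf x)\|^2$ for all $\mathbf x\in\mathbb R^d$. EDM algorithm. Given $\alpha>0$, $\beta\in[0,1)$, $\mathbf x^{(0)}\in\mathbb R^d$: set $\mathbf X^{(-1)}=\mathbf X^{(0)}=\mathbf 1_n(\mathbf x^{(0)})^\top$, $\mathbf M^{(-1)}=\mathbf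 0$; for $t\ge0$, $\mathbf M^{(t)}=\beta\mathbf M^{(t-1)}+(1-\beta)\nabla\mathbf F(\mathbf X^{(t)},\bm\Xi^{(t)})$; for $t\ge-1$, $\mathbf X^{(t+2)}=\mathbf W\big(2\mathbf X^{(t+1)}-\mathbf X^{(t)}-\alpha\mathbf M^{(t+1)}+\alpha\mathbf M^{(t)}\big)$. Write $\bar{\mathbf x}^{(t)}=\frac1n(\mathbf X^{(t)})^\top\mathbf 1_n$, $\bar{\mathbf m}^{(t)}=\frac1n(\mathbf M^{(t)})^\top\mathbf 1_n$ (so $\bar{\mathbf m}^{(-1)}=\mathbf 0$). Auxiliary sequence: $\mathbf z^{(0)}=\bar{\mathbf x}^{(0)}$ and $\mathbf z^{(t)}=\frac1{1-\beta}\bar{\mathbf x}^{(t)}-\frac{\beta}{1-\beta}\bar{\mathbf x}^{(t-1)}$ for $t\ge1$. *)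

theory Defs
  imports "HOL-Analysis.Analysis" "HOL-Probability.Probability"
begin

text \<open>Agents are indexed by a finite type 'n (so n = CARD('n)), parameters live in real^'d.
  A stacked matrix X in R^{n x d} is represented as a function 'n => real^'d (row i = x_i).\<close>

definition mix :: "real^'n^'n \<Rightarrow> ('n::finite \<Rightarrow> real^'d) \<Rightarrow> ('n \<Rightarrow> real^'d)" where
  "mix W X = (\<lambda>i. \<Sum>j\<in>UNIV. (W $ i $ j) *\<^sub>R X j)"

definition avg :: "('n::finite \<Rightarrow> real^'d) \<Rightarrow> real^'d" where
  "avg X = (1 / real CARD('n)) *\<^sub>R (\<Sum>i\<in>UNIV. X i)"

text \<open>The state at index t is (X^(t-1), X^(t), M^(t-1)),
  with the convention X^(-1) = X^(0) = 1 x0^T and M^(-1) = 0.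
  Xi t i is the sample xi_i^(t); gF i x xi is the stochastic gradient of F_i in x.\<close>
fun edm :: "real^'n^'n \<Rightarrow> real \<Rightarrow> real \<Rightarrow> real^'d \<Rightarrow> ('n::finite \<Rightarrow> real^'d \<Rightarrow> 'p \<Rightarrow> real^'d)
            \<Rightarrow> (nat \<Rightarrow> 'n \<Rightarrow> 'p) \<Rightarrow> nat
            \<Rightarrow> ('n \<Rightarrow> real^'d) \<times> ('n \<Rightarrow> real^'d) \<times> ('n \<Rightarrow> real^'d)" where
  "edm W \<alpha> \<beta> x0 gF Xi 0 = ((\<lambda>i. x0), (\<lambda>i. x0), (\<lambda>i. 0))"
| "edm W \<alpha> \<beta> x0 gF Xi (Suc t) =
     (case edm W \<alpha> \<beta> x0 gF Xi t of (Xp, Xc, Mp) \<Rightarrow>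
        (let Mc = (\<lambda>i. \<beta> *\<^sub>R Mp i + (1 - \<beta>) *\<^sub>R gF i (Xc i) (Xi t i))
         in (Xc, mix W (\<lambda>i. 2 *\<^sub>R Xc i - Xp i - \<alpha> *\<^sub>R Mc i + \<alpha> *\<^sub>R Mp i), Mc)))"

definition edmX where "edmX W \<alpha> \<beta> x0 gF Xi t = fst (snd (edm W \<alpha> \<beta> x0 gF Xi t))"
definition edmXprev where "edmXprev W \<alpha> \<beta> x0 gF Xi t = fst (edm W \<alpha> \<beta> x0 gF Xi t)"
definition edmMprev where "edmMprev W \<alpha> \<beta> x0 gF Xi t = snd (snd (edm W \<alpha> \<beta> x0 gF Xi t))"

definition edmz where
  "edmz W \<alpha> \<beta> x0 gF Xi t =
     (if t = 0 then avg (edmX W \<alpha> \<beta> x0 gF Xi 0)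
      else (1 / (1 - \<beta>)) *\<^sub>R avg (edmX W \<alpha> \<beta> x0 gF Xi t)
           - (\<beta> / (1 - \<beta>)) *\<^sub>R avg (edmX W \<alpha> \<beta> x0 gF Xi (t - 1)))"

definition floc :: "('n \<Rightarrow> real^'d \<Rightarrow> 'p \<Rightarrow> real) \<Rightarrow> ('n \<Rightarrow> 'p measure) \<Rightarrow> 'n \<Rightarrow> real^'d \<Rightarrow> real" where
  "floc F D i x = (\<integral>\<xi>. F i x \<xi> \<partial>D i)"

definition fglob :: "('n::finite \<Rightarrow> real^'d \<Rightarrow> 'p \<Rightarrow> real) \<Rightarrow> ('n \<Rightarrow> 'p measure) \<Rightarrow> real^'d \<Rightarrow> real" where
  "fglob F D x = (1 / real CARD('n)) * (\<Sum>i\<in>UNIV. floc F D i x)"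

definition fstar where "fstar F D = (INF x. fglob F D x)"

definition filt :: "'w measure \<Rightarrow> ('n \<Rightarrow> 'p measure) \<Rightarrow> ('n \<Rightarrow> nat \<Rightarrow> 'w \<Rightarrow> 'p) \<Rightarrow> nat \<Rightarrow> 'w measure" where
  "filt M D \<xi> t = sigma (space M) {\<xi> i s -` A \<inter> space M | i s A. s < t \<and> A \<in> sets (D i)}"

end

theory Submission
  imports Defs
begin

(* Averaging over the agents removes the doubly stochastic mixing matrix, so the auxiliary point
   z = (x_bar(t) - beta x_bar(t-1)) / (1 - beta) performs plain stochastic gradient descent,
   z(t+1) = z(t) - alpha g(t), where g(t) is the mean of the sampled gradients at X(t).
   Write g(t) = b + e with b the mean of the true local gradients at X(t) and e the gradient
   noise. The descent lemma for the L-smooth f together with the PL inequality at z(t) gives the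
   one-step bound up to two error sources. The mismatch between grad f(z(t)) and b is at most L
   times the distance of z(t) to the rows of X(t), which splits into the consensus error and
   z(t) - x_bar(t) = -alpha beta / (1 - beta) m_bar(t-1). The terms linear in e have mean zero
   and E |e|^2 <= sigma^2 / n, because the samples at step t are independent of the past and of
   each other; conditioning on the past reduces this to gradients taken at fixed points. *)

section \<open>Smooth functions\<close>

lemma smooth_descent:
  fixes f :: "'a::real_inner \<Rightarrow> real" and g :: "'a \<Rightarrow> 'a"
  assumes deriv: "\<And>x. (f has_derivative (\<lambda>h. g x \<bullet> h)) (at x)"
    and lip: "\<And>x y. norm (g x - g y) \<le> L * norm (x - y)"
  shows "f y \<le> f x + g x \<bullet> (y - x) + L / 2 * (norm (y - x))\<^sup>2"
proof -
  define d where "d = y - x"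
  define \<phi> where "\<phi> s = f (x + s *\<^sub>R d) - s * (g x \<bullet> d) - L / 2 * s\<^sup>2 * (norm d)\<^sup>2" for s
  have line: "((\<lambda>s. f (x + s *\<^sub>R d)) has_real_derivative g (x + s *\<^sub>R d) \<bullet> d) (at s)" for s
  proof -
    have "((\<lambda>s. x + s *\<^sub>R d) has_derivative (\<lambda>h. h *\<^sub>R d)) (at s)"
      by (auto intro!: derivative_eq_intros)
    from has_derivative_compose[OF this deriv]
    show ?thesis by (simp add: has_field_derivative_def mult_commute_abs)
  qed
  have \<phi>': "(\<phi> has_real_derivative g (x + s *\<^sub>R d) \<bullet> d - g x \<bullet> d - L / 2 * (2 * s) * (norm d)\<^sup>2) (at s)" for s
    unfolding \<phi>_def[abs_def] by (auto intro!: derivative_eq_intros line)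
  have \<phi>'_nonpos: "g (x + s *\<^sub>R d) \<bullet> d - g x \<bullet> d - L / 2 * (2 * s) * (norm d)\<^sup>2 \<le> 0" if "0 \<le> s" for s
  proof -
    have "g (x + s *\<^sub>R d) \<bullet> d - g x \<bullet> d = (g (x + s *\<^sub>R d) - g x) \<bullet> d"
      by (simp add: inner_diff_left)
    also have "\<dots> \<le> norm (g (x + s *\<^sub>R d) - g x) * norm d" by (rule norm_cauchy_schwarz)
    also have "\<dots> \<le> L * norm (s *\<^sub>R d) * norm d"
      using lip[of "x + s *\<^sub>R d" x] by (intro mult_right_mono) auto
    also have "\<dots> = L * s * (norm d)\<^sup>2" using that by (simp add: power2_eq_square)
    finally show ?thesis by simp
  qed
  have "\<phi> 1 \<le> \<phi> 0"
  proof (rule DERIV_nonpos_imp_nonincreasing[of 0 1])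
    fix s :: real assume "0 \<le> s" "s \<le> 1"
    then show "\<exists>y. (\<phi> has_real_derivative y) (at s) \<and> y \<le> 0"
      using \<phi>' \<phi>'_nonpos by blast
  qed simp
  then show ?thesis unfolding \<phi>_def d_def by (simp add: algebra_simps)
qed

lemma lipschitz_factor_nonneg:
  fixes g :: "'a::real_normed_vector \<Rightarrow> 'b::real_normed_vector" and x y :: 'a
  assumes "\<And>x y. norm (g x - g y) \<le> L * norm (x - y)" and "x \<noteq> y"
  shows "0 \<le> L"
proof -
  have "0 \<le> L * norm (x - y)" using assms(1)[of x y] norm_ge_zero order_trans by blast
  with \<open>x \<noteq> y\<close> show ?thesis by (simp add: zero_le_mult_iff)
qed

lemma norm_average_sq_le:
  fixes v :: "'i::finite \<Rightarrow> 'a::real_normed_vector"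
  shows "(norm ((1 / real CARD('i)) *\<^sub>R (\<Sum>k\<in>UNIV. v k)))\<^sup>2
           \<le> 1 / real CARD('i) * (\<Sum>k\<in>UNIV. (norm (v k))\<^sup>2)"
proof -
  let ?n = "real CARD('i)"
  have "norm ((1 / ?n) *\<^sub>R (\<Sum>k\<in>UNIV. v k)) \<le> 1 / ?n * (\<Sum>k\<in>UNIV. norm (v k))"
    using norm_sum[of v UNIV] by (simp add: divide_simps)
  then have "(norm ((1 / ?n) *\<^sub>R (\<Sum>k\<in>UNIV. v k)))\<^sup>2 \<le> (1 / ?n)\<^sup>2 * (\<Sum>k\<in>UNIV. norm (v k))\<^sup>2"
    by (metis norm_ge_zero power_mono power_mult_distrib)
  also have "\<dots> \<le> (1 / ?n)\<^sup>2 * ((\<Sum>k\<in>UNIV. (norm (v k))\<^sup>2) * ?n)"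
    using sum_squared_le_sum_of_squares[of "\<lambda>k. norm (v k)" UNIV] by (intro mult_left_mono) auto
  also have "\<dots> = 1 / ?n * (\<Sum>k\<in>UNIV. (norm (v k))\<^sup>2)" by (simp add: power2_eq_square)
  finally show ?thesis .
qed

lemma sum_sq_dist_eq_sq_dist_mean_plus_variance:
  fixes x :: "'i::finite \<Rightarrow> 'a::real_inner"
  defines "m \<equiv> (1 / real CARD('i)) *\<^sub>R (\<Sum>k\<in>UNIV. x k)"
  shows "(\<Sum>k\<in>UNIV. (norm (z - x k))\<^sup>2)
           = real CARD('i) * (norm (z - m))\<^sup>2 + (\<Sum>k\<in>UNIV. (norm (x k - m))\<^sup>2)"
proof -
  have deviations_sum_zero: "(\<Sum>k\<in>UNIV. x k - m) = 0"
    by (simp add: m_def sum_subtractf sum_constant_scaleR)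
  have "(norm (z - x k))\<^sup>2 = (norm (z - m))\<^sup>2 - 2 * ((z - m) \<bullet> (x k - m)) + (norm (x k - m))\<^sup>2" for k
  proof -
    have "z - x k = (z - m) - (x k - m)" by simp
    then show ?thesis
      by (simp only: power2_norm_eq_inner inner_diff_left inner_diff_right) (simp add: inner_commute)
  qed
  moreover have "(\<Sum>k\<in>UNIV. (z - m) \<bullet> (x k - m)) = 0"
    by (simp only: inner_sum_right[symmetric] deviations_sum_zero inner_zero_right)
  ultimately show ?thesis
    by (simp add: sum.distrib sum_subtractf flip: sum_distrib_left)
qed

lemma average_gradient_dist_sq_le:
  fixes g :: "'i::finite \<Rightarrow> 'a::real_inner \<Rightarrow> 'a" and x :: "'i \<Rightarrow> 'a"
  assumes lip: "\<And>i x y. norm (g i x - g i y) \<le> L * norm (x - y)"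
  defines "m \<equiv> (1 / real CARD('i)) *\<^sub>R (\<Sum>k\<in>UNIV. x k)"
  shows "(norm ((1 / real CARD('i)) *\<^sub>R (\<Sum>i\<in>UNIV. g i z)
                - (1 / real CARD('i)) *\<^sub>R (\<Sum>i\<in>UNIV. g i (x i))))\<^sup>2
    \<le> L\<^sup>2 * ((norm (z - m))\<^sup>2 + 1 / real CARD('i) * (\<Sum>k\<in>UNIV. (norm (x k - m))\<^sup>2))"
proof -
  let ?n = "real CARD('i)"
  have "(1 / ?n) *\<^sub>R (\<Sum>i\<in>UNIV. g i z) - (1 / ?n) *\<^sub>R (\<Sum>i\<in>UNIV. g i (x i))
      = (1 / ?n) *\<^sub>R (\<Sum>i\<in>UNIV. g i z - g i (x i))"
    by (simp add: sum_subtractf scaleR_diff_right)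
  then have "(norm ((1 / ?n) *\<^sub>R (\<Sum>i\<in>UNIV. g i z) - (1 / ?n) *\<^sub>R (\<Sum>i\<in>UNIV. g i (x i))))\<^sup>2
      \<le> 1 / ?n * (\<Sum>k\<in>UNIV. (norm (g k z - g k (x k)))\<^sup>2)"
    using norm_average_sq_le[of "\<lambda>i. g i z - g i (x i)"] by simp
  also have "\<dots> \<le> 1 / ?n * (\<Sum>k\<in>UNIV. L\<^sup>2 * (norm (z - x k))\<^sup>2)"
    using lip by (intro mult_left_mono sum_mono)
      (auto simp: power_mult_distrib[symmetric] intro: power_mono)
  also have "\<dots> = L\<^sup>2 * (1 / ?n * (\<Sum>k\<in>UNIV. (norm (z - x k))\<^sup>2))"
    by (simp add: sum_distrib_left)
  also have "\<dots> = L\<^sup>2 * ((norm (z - m))\<^sup>2 + 1 / ?n * (\<Sum>k\<in>UNIV. (norm (x k - m))\<^sup>2))"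
    unfolding sum_sq_dist_eq_sq_dist_mean_plus_variance[of z x, folded m_def]
    by (simp add: field_simps)
  finally show ?thesis .
qed

lemma pl_descent_step:
  fixes a b e z :: "'a::real_inner" and f :: "'a \<Rightarrow> real"
  assumes descent: "f (z - \<alpha> *\<^sub>R (b + e))
                      \<le> f z + a \<bullet> (z - \<alpha> *\<^sub>R (b + e) - z) + L / 2 * (norm (z - \<alpha> *\<^sub>R (b + e) - z))\<^sup>2"
    and PL: "2 * \<mu> * (f z - fmin) \<le> (norm a)\<^sup>2" and "0 \<le> \<alpha>"
  shows "f (z - \<alpha> *\<^sub>R (b + e)) - fmin
     \<le> (1 - \<alpha> * \<mu>) * (f z - fmin) - \<alpha> * (1 - \<alpha> * L) / 2 * (norm b)\<^sup>2 + \<alpha> / 2 * (norm (a - b))\<^sup>2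
        + (- \<alpha> * (a \<bullet> e) + L * \<alpha>\<^sup>2 * (b \<bullet> e) + L * \<alpha>\<^sup>2 / 2 * (norm e)\<^sup>2)"
proof -
  have "(norm (b + e))\<^sup>2 = (norm b)\<^sup>2 + 2 * (b \<bullet> e) + (norm e)\<^sup>2"
    by (simp add: power2_norm_eq_inner inner_add_left inner_add_right inner_commute)
  then have step_sq: "(norm (z - \<alpha> *\<^sub>R (b + e) - z))\<^sup>2 = \<alpha>\<^sup>2 * ((norm b)\<^sup>2 + 2 * (b \<bullet> e) + (norm e)\<^sup>2)"
    by (simp add: power_mult_distrib)
  have descent': "f (z - \<alpha> *\<^sub>R (b + e)) \<le> f z - \<alpha> * (a \<bullet> b) - \<alpha> * (a \<bullet> e)
                     + L / 2 * (\<alpha>\<^sup>2 * ((norm b)\<^sup>2 + 2 * (b \<bullet> e) + (norm e)\<^sup>2))"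
    using descent unfolding step_sq by (simp add: inner_add_right algebra_simps)
  have PL': "\<alpha> * \<mu> * (f z - fmin) \<le> \<alpha> / 2 * (norm a)\<^sup>2"
    using mult_left_mono[OF PL, of "\<alpha> / 2"] \<open>0 \<le> \<alpha>\<close> by (simp add: algebra_simps)
  have diff_sq: "(norm (a - b))\<^sup>2 = (norm a)\<^sup>2 - 2 * (a \<bullet> b) + (norm b)\<^sup>2"
    by (simp add: power2_norm_eq_inner inner_diff_left inner_diff_right inner_commute)
  have "(1 - \<alpha> * \<mu>) * (f z - fmin) - \<alpha> * (1 - \<alpha> * L) / 2 * (norm b)\<^sup>2 + \<alpha> / 2 * (norm (a - b))\<^sup>2
        + (- \<alpha> * (a \<bullet> e) + L * \<alpha>\<^sup>2 * (b \<bullet> e) + L * \<alpha>\<^sup>2 / 2 * (norm e)\<^sup>2)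
      = f z - fmin - \<alpha> * \<mu> * (f z - fmin) + \<alpha> / 2 * (norm a)\<^sup>2 - \<alpha> * (a \<bullet> b) - \<alpha> * (a \<bullet> e)
        + L / 2 * (\<alpha>\<^sup>2 * ((norm b)\<^sup>2 + 2 * (b \<bullet> e) + (norm e)\<^sup>2))"
    unfolding diff_sq by (simp add: field_simps power2_eq_square)
  with descent' PL' show ?thesis by linarith
qed

section \<open>The averaged EDM iteration\<close>

lemma has_derivative_fglob:
  fixes F :: "'n::finite \<Rightarrow> real^'d \<Rightarrow> 'p \<Rightarrow> real"
  assumes "\<And>i x. (floc F D i has_derivative (\<lambda>h. gf i x \<bullet> h)) (at x)"
  shows "(fglob F D has_derivative (\<lambda>h. ((1 / real CARD('n)) *\<^sub>R (\<Sum>i\<in>UNIV. gf i x)) \<bullet> h)) (at x)"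
proof -
  have "((\<lambda>x. 1 / real CARD('n) * (\<Sum>i\<in>UNIV. floc F D i x))
         has_derivative (\<lambda>h. 1 / real CARD('n) * (\<Sum>i\<in>UNIV. gf i x \<bullet> h))) (at x)"
    using assms by (intro has_derivative_mult_right has_derivative_sum) auto
  then show ?thesis by (simp add: fglob_def[abs_def] inner_sum_left)
qed

lemma avg_add: "avg (\<lambda>i. a i + b i) = avg a + avg b"
  by (simp add: avg_def sum.distrib scaleR_add_right)

lemma avg_diff: "avg (\<lambda>i. a i - b i) = avg a - avg b"
  by (simp add: avg_def sum_subtractf scaleR_diff_right)

lemma avg_scaleR: "avg (\<lambda>i. c *\<^sub>R a i) = c *\<^sub>R avg a"
  by (simp add: avg_def scaleR_sum_right)

lemma avg_const: "avg (\<lambda>i::'n::finite. x) = x"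
  by (simp add: avg_def sum_constant_scaleR del: sum_constant)

lemma avg_mix:
  assumes "\<And>j. (\<Sum>i\<in>UNIV. W $ i $ j) = 1"
  shows "avg (mix W X) = avg X"
proof -
  have "(\<Sum>i\<in>UNIV. \<Sum>j\<in>UNIV. W $ i $ j *\<^sub>R X j) = (\<Sum>j\<in>UNIV. (\<Sum>i\<in>UNIV. W $ i $ j) *\<^sub>R X j)"
    by (subst sum.swap) (simp add: scaleR_sum_left)
  then show ?thesis using assms by (simp add: avg_def mix_def)
qed

lemma edm_0:
  "edmXprev W \<alpha> \<beta> x0 gF Xi 0 = (\<lambda>i. x0)"
  "edmX W \<alpha> \<beta> x0 gF Xi 0 = (\<lambda>i. x0)"
  "edmMprev W \<alpha> \<beta> x0 gF Xi 0 = (\<lambda>i. 0)"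
  by (simp_all add: edmXprev_def edmX_def edmMprev_def)

lemma edm_Suc:
  "edmXprev W \<alpha> \<beta> x0 gF Xi (Suc s) = edmX W \<alpha> \<beta> x0 gF Xi s"
  "edmMprev W \<alpha> \<beta> x0 gF Xi (Suc s) = (\<lambda>i. \<beta> *\<^sub>R edmMprev W \<alpha> \<beta> x0 gF Xi s i
       + (1 - \<beta>) *\<^sub>R gF i (edmX W \<alpha> \<beta> x0 gF Xi s i) (Xi s i))"
  "edmX W \<alpha> \<beta> x0 gF Xi (Suc s) = mix W (\<lambda>i. 2 *\<^sub>R edmX W \<alpha> \<beta> x0 gF Xi s i
       - edmXprev W \<alpha> \<beta> x0 gF Xi s i - \<alpha> *\<^sub>R edmMprev W \<alpha> \<beta> x0 gF Xi (Suc s) i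
       + \<alpha> *\<^sub>R edmMprev W \<alpha> \<beta> x0 gF Xi s i)"
  by (cases "edm W \<alpha> \<beta> x0 gF Xi s"; simp add: edmXprev_def edmX_def edmMprev_def Let_def)+

lemma edm_cong_past:
  "(\<And>s'. s' < s \<Longrightarrow> Xi s' = Xi' s') \<Longrightarrow> edm W \<alpha> \<beta> x0 gF Xi s = edm W \<alpha> \<beta> x0 gF Xi' s"
  by (induction s) auto

context
  fixes W :: "real^'n::finite^'n"
  assumes column_sums: "\<And>j. (\<Sum>i\<in>UNIV. W $ i $ j) = 1"
begin

lemma avg_edmX:
  "avg (edmX W \<alpha> \<beta> x0 gF Xi s)
     = avg (edmXprev W \<alpha> \<beta> x0 gF Xi s) - \<alpha> *\<^sub>R avg (edmMprev W \<alpha> \<beta> x0 gF Xi s)"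
proof (induction s)
  case 0
  then show ?case by (simp add: edm_0 avg_const)
next
  case (Suc s)
  have "avg (edmXprev W \<alpha> \<beta> x0 gF Xi s)
          = avg (edmX W \<alpha> \<beta> x0 gF Xi s) + \<alpha> *\<^sub>R avg (edmMprev W \<alpha> \<beta> x0 gF Xi s)"
    using Suc.IH by simp
  then show ?case
    unfolding edm_Suc(1) edm_Suc(3)[of W \<alpha> \<beta> x0 gF Xi s] avg_mix[OF column_sums]
    by (simp add: avg_add avg_diff avg_scaleR) (simp add: algebra_simps scaleR_2)
qed

context
  fixes \<beta> :: real
  assumes \<beta>_ne_1: "\<beta> \<noteq> 1"
begin

lemma edmz_eq:
  "edmz W \<alpha> \<beta> x0 gF Xi s = (1 / (1 - \<beta>)) *\<^sub>R
     (avg (edmX W \<alpha> \<beta> x0 gF Xi s) - \<beta> *\<^sub>R avg (edmXprev W \<alpha> \<beta> x0 gF Xi s))"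
proof (cases s)
  case 0
  have "x0 - \<beta> *\<^sub>R x0 = (1 - \<beta>) *\<^sub>R x0" by (simp add: algebra_simps)
  with 0 \<beta>_ne_1 show ?thesis by (simp add: edmz_def edm_0 avg_const)
next
  case (Suc k)
  then show ?thesis by (simp add: edmz_def edm_Suc(1) scaleR_diff_right)
qed

lemma edmz_Suc:
  "edmz W \<alpha> \<beta> x0 gF Xi (Suc s)
     = edmz W \<alpha> \<beta> x0 gF Xi s - \<alpha> *\<^sub>R avg (\<lambda>i. gF i (edmX W \<alpha> \<beta> x0 gF Xi s i) (Xi s i))"
proof -
  let ?X = "avg (edmX W \<alpha> \<beta> x0 gF Xi s)" and ?P = "avg (edmXprev W \<alpha> \<beta> x0 gF Xi s)"
    and ?M = "avg (edmMprev W \<alpha> \<beta> x0 gF Xi s)"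
    and ?G = "avg (\<lambda>i. gF i (edmX W \<alpha> \<beta> x0 gF Xi s i) (Xi s i))"
  have X_Suc: "avg (edmX W \<alpha> \<beta> x0 gF Xi (Suc s)) = ?X - \<alpha> *\<^sub>R (\<beta> *\<^sub>R ?M + (1 - \<beta>) *\<^sub>R ?G)"
    using avg_edmX[of \<alpha> \<beta> x0 gF Xi "Suc s"] by (simp add: edm_Suc avg_add avg_scaleR)
  have P: "?P = ?X + \<alpha> *\<^sub>R ?M" using avg_edmX[of \<alpha> \<beta> x0 gF Xi s] by simp
  have "avg (edmX W \<alpha> \<beta> x0 gF Xi (Suc s)) - \<beta> *\<^sub>R ?X = (?X - \<beta> *\<^sub>R ?P) - ((1 - \<beta>) * \<alpha>) *\<^sub>R ?G"
    unfolding X_Suc P by (simp add: algebra_simps)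
  with \<beta>_ne_1 show ?thesis by (simp add: edmz_eq edm_Suc(1) scaleR_diff_right)
qed

lemma edmz_minus_avg_edmX:
  "edmz W \<alpha> \<beta> x0 gF Xi s - avg (edmX W \<alpha> \<beta> x0 gF Xi s)
     = - (\<alpha> * \<beta> / (1 - \<beta>)) *\<^sub>R avg (edmMprev W \<alpha> \<beta> x0 gF Xi s)"
proof -
  let ?X = "avg (edmX W \<alpha> \<beta> x0 gF Xi s)" and ?P = "avg (edmXprev W \<alpha> \<beta> x0 gF Xi s)"
    and ?M = "avg (edmMprev W \<alpha> \<beta> x0 gF Xi s)"
  have P: "?P = ?X + \<alpha> *\<^sub>R ?M" using avg_edmX[of \<alpha> \<beta> x0 gF Xi s] by simp
  have "?X - \<beta> *\<^sub>R ?P - (1 - \<beta>) *\<^sub>R ?X = - (\<alpha> * \<beta>) *\<^sub>R ?M"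
    unfolding P by (simp add: algebra_simps)
  moreover have "edmz W \<alpha> \<beta> x0 gF Xi s - ?X = (1 / (1 - \<beta>)) *\<^sub>R (?X - \<beta> *\<^sub>R ?P - (1 - \<beta>) *\<^sub>R ?X)"
    using \<beta>_ne_1 by (simp add: edmz_eq scaleR_diff_right)
  ultimately show ?thesis by (simp add: divide_inverse mult.commute)
qed

end

end

section \<open>Measurability and square integrability\<close>

lemma measurable_comp_pair:
  assumes "(\<lambda>(x, p). g x p) \<in> borel_measurable (borel \<Otimes>\<^sub>M N')"
    and "f \<in> borel_measurable N" and "h \<in> measurable N N'"
  shows "(\<lambda>\<omega>. g (f \<omega>) (h \<omega>)) \<in> borel_measurable N"
  using measurable_compose[OF measurable_Pair[OF assms(2,3)] assms(1)] by simp

lemma measurable_edm: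
  fixes \<zeta> :: "'n::finite \<Rightarrow> nat \<Rightarrow> 'w \<Rightarrow> 'p" and gF :: "'n \<Rightarrow> real^'d \<Rightarrow> 'p \<Rightarrow> real^'d"
  assumes gF: "\<And>i. (\<lambda>(x, p). gF i x p) \<in> borel_measurable (borel \<Otimes>\<^sub>M D i)"
    and \<zeta>: "\<And>i s. s < T \<Longrightarrow> \<zeta> i s \<in> measurable N (D i)"
    and "s \<le> T"
  shows "(\<lambda>\<omega>. edmX W \<alpha> \<beta> x0 gF (\<lambda>s i. \<zeta> i s \<omega>) s k) \<in> borel_measurable N"
    and "(\<lambda>\<omega>. edmXprev W \<alpha> \<beta> x0 gF (\<lambda>s i. \<zeta> i s \<omega>) s k) \<in> borel_measurable N"
    and "(\<lambda>\<omega>. edmMprev W \<alpha> \<beta> x0 gF (\<lambda>s i. \<zeta> i s \<omega>) s k) \<in> borel_measurable N"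
proof -
  let ?X = "\<lambda>s k \<omega>. edmX W \<alpha> \<beta> x0 gF (\<lambda>s i. \<zeta> i s \<omega>) s k"
    and ?P = "\<lambda>s k \<omega>. edmXprev W \<alpha> \<beta> x0 gF (\<lambda>s i. \<zeta> i s \<omega>) s k"
    and ?M = "\<lambda>s k \<omega>. edmMprev W \<alpha> \<beta> x0 gF (\<lambda>s i. \<zeta> i s \<omega>) s k"
  have "\<forall>k. ?X s k \<in> borel_measurable N \<and> ?P s k \<in> borel_measurable N \<and> ?M s k \<in> borel_measurable N"
    using \<open>s \<le> T\<close>
  proof (induction s)
    case 0
    then show ?case by (simp add: edm_0)
  next
    case (Suc s)
    then have X: "?X s k \<in> borel_measurable N" and P: "?P s k \<in> borel_measurable N"
      and M: "?M s k \<in> borel_measurable N" for k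
      by auto
    have "(\<lambda>\<omega>. gF k (?X s k \<omega>) (\<zeta> k s \<omega>)) \<in> borel_measurable N" for k
      using Suc.prems by (intro measurable_comp_pair[OF gF X \<zeta>]) simp
    with M have M_Suc: "?M (Suc s) k \<in> borel_measurable N" for k
      unfolding edm_Suc(2) by measurable
    have "?X (Suc s) k \<in> borel_measurable N" for k
      unfolding edm_Suc(3) mix_def using X P M M_Suc by measurable
    with X M_Suc show ?case by (simp add: edm_Suc(1))
  qed
  then show "?X s k \<in> borel_measurable N" "?P s k \<in> borel_measurable N" "?M s k \<in> borel_measurable N"
    by auto
qed

lemma sets_filt:
  "sets (filt M D \<xi> s)
     = sigma_sets (space M) {\<xi> i s' -` A \<inter> space M | i s' A. s' < s \<and> A \<in> sets (D i)}"
  unfolding filt_def by (subst sets_measure_of) auto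

lemma space_filt [simp]: "space (filt M D \<xi> s) = space M"
  unfolding filt_def by (subst space_measure_of) auto

lemma subalgebra_filt:
  assumes "\<And>i s. \<xi> i s \<in> measurable M (D i)"
  shows "subalgebra M (filt M D \<xi> s)"
proof -
  have "{\<xi> i s' -` A \<inter> space M | i s' A. s' < s \<and> A \<in> sets (D i)} \<subseteq> sets M"
    using assms by (auto intro: measurable_sets)
  then show ?thesis
    unfolding subalgebra_def sets_filt by (simp add: sets.sigma_sets_subset)
qed

lemma measurable_filt_sample:
  assumes "\<xi> i s' \<in> measurable M (D i)" and "s' < s"
  shows "\<xi> i s' \<in> measurable (filt M D \<xi> s) (D i)"
proof (rule measurableI)
  show "\<xi> i s' x \<in> space (D i)" if "x \<in> space (filt M D \<xi> s)" for x
    using that measurable_space[OF assms(1)] by simp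
  show "\<xi> i s' -` A \<inter> space (filt M D \<xi> s) \<in> sets (filt M D \<xi> s)" if "A \<in> sets (D i)" for A
    using that \<open>s' < s\<close> unfolding sets_filt by (auto intro: sigma_sets.Basic)
qed

definition sq_integrable :: "'a measure \<Rightarrow> ('a \<Rightarrow> 'b::euclidean_space) \<Rightarrow> bool" where
  "sq_integrable N u \<longleftrightarrow> u \<in> borel_measurable N \<and> integrable N (\<lambda>\<omega>. (norm (u \<omega>))\<^sup>2)"

lemma sq_integrable_add:
  assumes "sq_integrable N u" "sq_integrable N v"
  shows "sq_integrable N (\<lambda>\<omega>. u \<omega> + v \<omega>)"
proof -
  from assms have [measurable]: "u \<in> borel_measurable N" "v \<in> borel_measurable N"
    and iu: "integrable N (\<lambda>\<omega>. (norm (u \<omega>))\<^sup>2)" and iv: "integrable N (\<lambda>\<omega>. (norm (v \<omega>))\<^sup>2)"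
    by (auto simp: sq_integrable_def)
  have bound: "(norm (u \<omega> + v \<omega>))\<^sup>2 \<le> 2 * (norm (u \<omega>))\<^sup>2 + 2 * (norm (v \<omega>))\<^sup>2" for \<omega>
  proof -
    have "(norm (u \<omega> + v \<omega>))\<^sup>2 \<le> (norm (u \<omega>) + norm (v \<omega>))\<^sup>2"
      by (intro power_mono norm_triangle_ineq) simp
    also have "\<dots> \<le> 2 * (norm (u \<omega>))\<^sup>2 + 2 * (norm (v \<omega>))\<^sup>2"
      using sum_squares_bound[of "norm (u \<omega>)" "norm (v \<omega>)"] by (simp add: power2_sum)
    finally show ?thesis .
  qed
  have "integrable N (\<lambda>\<omega>. (norm (u \<omega> + v \<omega>))\<^sup>2)"
  proof (rule Bochner_Integration.integrable_bound)
    show "integrable N (\<lambda>\<omega>. 2 * (norm (u \<omega>))\<^sup>2 + 2 * (norm (v \<omega>))\<^sup>2)" using iu iv by auto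
    show "AE \<omega> in N. norm ((norm (u \<omega> + v \<omega>))\<^sup>2) \<le> norm (2 * (norm (u \<omega>))\<^sup>2 + 2 * (norm (v \<omega>))\<^sup>2)"
      using bound by (intro AE_I2) (simp add: abs_of_nonneg)
  qed measurable
  moreover have "(\<lambda>\<omega>. u \<omega> + v \<omega>) \<in> borel_measurable N" by measurable
  ultimately show ?thesis unfolding sq_integrable_def by blast
qed

lemma sq_integrable_scaleR: "sq_integrable N u \<Longrightarrow> sq_integrable N (\<lambda>\<omega>. c *\<^sub>R u \<omega>)"
  unfolding sq_integrable_def by (auto simp: power_mult_distrib)

lemma sq_integrable_diff:
  "sq_integrable N u \<Longrightarrow> sq_integrable N v \<Longrightarrow> sq_integrable N (\<lambda>\<omega>. u \<omega> - v \<omega>)"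
  using sq_integrable_add[of N u "\<lambda>\<omega>. (- 1) *\<^sub>R v \<omega>"] sq_integrable_scaleR[of N v "- 1"] by simp

lemma sq_integrable_inner:
  fixes u v :: "'a \<Rightarrow> 'b::euclidean_space"
  assumes "sq_integrable N u" "sq_integrable N v"
  shows "integrable N (\<lambda>\<omega>. u \<omega> \<bullet> v \<omega>)"
proof (rule Bochner_Integration.integrable_bound)
  from assms have [measurable]: "u \<in> borel_measurable N" "v \<in> borel_measurable N"
    and iu: "integrable N (\<lambda>\<omega>. (norm (u \<omega>))\<^sup>2)" and iv: "integrable N (\<lambda>\<omega>. (norm (v \<omega>))\<^sup>2)"
    by (auto simp: sq_integrable_def)
  show "integrable N (\<lambda>\<omega>. (norm (u \<omega>))\<^sup>2 + (norm (v \<omega>))\<^sup>2)" using iu iv by auto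
  show "(\<lambda>\<omega>. u \<omega> \<bullet> v \<omega>) \<in> borel_measurable N" by measurable
  have "\<bar>u \<omega> \<bullet> v \<omega>\<bar> \<le> (norm (u \<omega>))\<^sup>2 + (norm (v \<omega>))\<^sup>2" for \<omega>
  proof -
    have "\<bar>u \<omega> \<bullet> v \<omega>\<bar> \<le> norm (u \<omega>) * norm (v \<omega>)" by (rule Cauchy_Schwarz_ineq2)
    moreover have "2 * (norm (u \<omega>) * norm (v \<omega>)) \<le> (norm (u \<omega>))\<^sup>2 + (norm (v \<omega>))\<^sup>2"
      using sum_squares_bound[of "norm (u \<omega>)" "norm (v \<omega>)"] by simp
    moreover have "0 \<le> norm (u \<omega>) * norm (v \<omega>)" by simp
    ultimately show ?thesis by linarith
  qed
  then show "AE \<omega> in N. norm (u \<omega> \<bullet> v \<omega>) \<le> norm ((norm (u \<omega>))\<^sup>2 + (norm (v \<omega>))\<^sup>2)"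
    by (intro AE_I2) simp
qed

lemma sq_integrable_component:
  fixes u :: "'a \<Rightarrow> real^'d"
  assumes "sq_integrable N u"
  shows "sq_integrable N (\<lambda>\<omega>. u \<omega> $ j)"
proof -
  from assms have u: "u \<in> borel_measurable N" and int: "integrable N (\<lambda>\<omega>. (norm (u \<omega>))\<^sup>2)"
    by (auto simp: sq_integrable_def)
  have uj [measurable]: "(\<lambda>\<omega>. u \<omega> $ j) \<in> borel_measurable N"
    using measurable_compose[OF u borel_measurable_nth] by simp
  have "(\<lambda>\<omega>. (norm (u \<omega> $ j))\<^sup>2) \<in> borel_measurable N" by measurable
  moreover have "(norm (u \<omega> $ j))\<^sup>2 \<le> (norm (u \<omega>))\<^sup>2" for \<omega>
    by (intro power_mono) (simp_all add: component_le_norm_cart)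
  ultimately have "integrable N (\<lambda>\<omega>. (norm (u \<omega> $ j))\<^sup>2)"
    by (intro Bochner_Integration.integrable_bound[OF int]) auto
  with uj show ?thesis unfolding sq_integrable_def by simp
qed

context finite_measure
begin

lemma sq_integrable_const: "sq_integrable M (\<lambda>\<omega>. c)"
  unfolding sq_integrable_def by simp

lemma sq_integrable_sum:
  "(\<And>k. k \<in> A \<Longrightarrow> sq_integrable M (u k)) \<Longrightarrow> sq_integrable M (\<lambda>\<omega>. \<Sum>k\<in>A. u k \<omega>)"
  by (induction A rule: infinite_finite_induct) (auto simp: sq_integrable_const sq_integrable_add)

lemma sq_integrable_avg:
  "(\<And>k. sq_integrable M (\<lambda>\<omega>. u \<omega> k)) \<Longrightarrow> sq_integrable M (\<lambda>\<omega>. avg (u \<omega>))"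
  unfolding avg_def by (intro sq_integrable_scaleR sq_integrable_sum)

lemma sq_integrable_imp_integrable:
  fixes u :: "'a \<Rightarrow> real"
  shows "sq_integrable M u \<Longrightarrow> integrable M u"
  unfolding sq_integrable_def by (auto intro: square_integrable_imp_integrable)

end

lemma (in prob_space) integral_indep_var_le:
  fixes \<Psi> :: "'x \<times> 'x \<Rightarrow> real"
  assumes indep: "indep_var N1 X N2 Y"
    and \<Psi>: "\<Psi> \<in> borel_measurable (N1 \<Otimes>\<^sub>M N2)"
    and int: "integrable M (\<lambda>\<omega>. \<Psi> (X \<omega>, Y \<omega>))"
    and bound: "\<And>x. x \<in> space N1 \<Longrightarrow> (\<integral>\<omega>. \<Psi> (x, Y \<omega>) \<partial>M) \<le> K" and "0 \<le> K"
  shows "(\<integral>\<omega>. \<Psi> (X \<omega>, Y \<omega>) \<partial>M) \<le> K"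
proof -
  have X: "random_variable N1 X" and Y: "random_variable N2 Y"
    and joint: "distr M N1 X \<Otimes>\<^sub>M distr M N2 Y = distr M (N1 \<Otimes>\<^sub>M N2) (\<lambda>\<omega>. (X \<omega>, Y \<omega>))"
    using indep unfolding indep_var_distribution_eq by auto
  have XY: "(\<lambda>\<omega>. (X \<omega>, Y \<omega>)) \<in> measurable M (N1 \<Otimes>\<^sub>M N2)"
    using X Y by (rule measurable_Pair)
  interpret PX: prob_space "distr M N1 X" by (rule prob_space_distr[OF X])
  interpret PY: prob_space "distr M N2 Y" by (rule prob_space_distr[OF Y])
  interpret P: pair_sigma_finite "distr M N1 X" "distr M N2 Y" ..
  have "integrable (distr M N1 X \<Otimes>\<^sub>M distr M N2 Y) \<Psi>"
    using int unfolding joint integrable_distr_eq[OF XY \<Psi>] .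
  then have "(\<integral>\<omega>. \<Psi> (X \<omega>, Y \<omega>) \<partial>M) = (\<integral>x. (\<integral>y. \<Psi> (x, y) \<partial>distr M N2 Y) \<partial>distr M N1 X)"
    by (simp add: integral_distr[OF XY \<Psi>, symmetric] joint P.integral_fst')
  also have "\<dots> \<le> K"
  proof (cases "integrable (distr M N1 X) (\<lambda>x. \<integral>y. \<Psi> (x, y) \<partial>distr M N2 Y)")
    case True
    have "(\<integral>y. \<Psi> (x, y) \<partial>distr M N2 Y) \<le> K" if "x \<in> space N1" for x
      using bound[OF that] measurable_Pair2[OF \<Psi> that] by (simp add: integral_distr[OF Y])
    then have "(\<integral>x. (\<integral>y. \<Psi> (x, y) \<partial>distr M N2 Y) \<partial>distr M N1 X) \<le> (\<integral>x. K \<partial>distr M N1 X)"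
      by (intro integral_mono[OF True]) auto
    then show ?thesis using PX.prob_space by simp
  next
    case False
    with \<open>0 \<le> K\<close> show ?thesis by (simp add: not_integrable_integral_eq)
  qed
  finally show ?thesis .
qed

section \<open>The optimization problem and the stochastic setting\<close>

locale smooth_objective =
  fixes F :: "'n::finite \<Rightarrow> real^'d \<Rightarrow> 'p \<Rightarrow> real" and D :: "'n \<Rightarrow> 'p measure"
    and gf :: "'n \<Rightarrow> real^'d \<Rightarrow> real^'d" and L :: real
  assumes has_derivative_floc: "\<And>i x. (floc F D i has_derivative (\<lambda>h. gf i x \<bullet> h)) (at x)"
    and gf_lipschitz: "\<And>i x y. norm (gf i x - gf i y) \<le> L * norm (x - y)"
    and floc_bdd_below: "\<And>i. bdd_below (range (floc F D i))"
begin

abbreviation grad_f :: "real^'d \<Rightarrow> real^'d" where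
  "grad_f x \<equiv> (1 / real CARD('n)) *\<^sub>R (\<Sum>i\<in>UNIV. gf i x)"

lemma grad_f_eq_avg: "grad_f x = avg (\<lambda>i. gf i x)"
  by (simp add: avg_def)

lemma L_nonneg: "0 \<le> L"
  using lipschitz_factor_nonneg[of "gf undefined" L 0 "axis undefined 1"] gf_lipschitz by simp

lemma borel_measurable_gf [measurable]: "gf i \<in> borel_measurable borel"
proof -
  have "L-lipschitz_on UNIV (gf i)"
    by (rule lipschitz_onI) (simp_all add: dist_norm gf_lipschitz L_nonneg)
  then show ?thesis by (intro borel_measurable_continuous_onI lipschitz_on_continuous_on)
qed

lemma fglob_has_derivative: "(fglob F D has_derivative (\<lambda>h. grad_f x \<bullet> h)) (at x)"
  by (rule has_derivative_fglob[OF has_derivative_floc])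

lemma borel_measurable_fglob [measurable]: "fglob F D \<in> borel_measurable borel"
  using fglob_has_derivative
  by (intro borel_measurable_continuous_onI continuous_at_imp_continuous_on)
    (auto intro: has_derivative_continuous)

lemma grad_f_lipschitz: "norm (grad_f x - grad_f y) \<le> L * norm (x - y)"
proof -
  have "norm (grad_f x - grad_f y) = 1 / real CARD('n) * norm (\<Sum>i\<in>UNIV. gf i x - gf i y)"
    by (simp add: sum_subtractf flip: scaleR_diff_right)
  also have "\<dots> \<le> 1 / real CARD('n) * (\<Sum>i\<in>(UNIV::'n set). L * norm (x - y))"
    by (intro mult_left_mono order_trans[OF norm_sum sum_mono] gf_lipschitz) simp
  also have "\<dots> = L * norm (x - y)" by simp
  finally show ?thesis .
qed

lemma fglob_descent: "fglob F D y \<le> fglob F D x + grad_f x \<bullet> (y - x) + L / 2 * (norm (y - x))\<^sup>2"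
  by (rule smooth_descent[OF fglob_has_derivative grad_f_lipschitz])

lemma fstar_le_fglob: "fstar F D \<le> fglob F D x"
proof -
  obtain c where c: "\<And>i x. c i \<le> floc F D i x"
    using floc_bdd_below unfolding bdd_below_def by (metis rangeI)
  have "1 / real CARD('n) * (\<Sum>i\<in>UNIV. c i) \<le> fglob F D x" for x
    unfolding fglob_def by (intro mult_left_mono sum_mono c) simp
  then have "bdd_below (range (fglob F D))" by (auto simp: bdd_below_def)
  then show ?thesis unfolding fstar_def by (simp add: cInf_lower)
qed

lemma fglob_gap_le_quadratic:
  "fglob F D x - fstar F D
     \<le> fglob F D 0 - fstar F D + (norm (grad_f 0))\<^sup>2 / 2 + (1 + L) / 2 * (norm x)\<^sup>2"
proof -
  have "grad_f 0 \<bullet> x \<le> norm (grad_f 0) * norm x" by (rule norm_cauchy_schwarz)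
  also have "\<dots> \<le> (norm (grad_f 0))\<^sup>2 / 2 + (norm x)\<^sup>2 / 2"
    using sum_squares_bound[of "norm (grad_f 0)" "norm x"] by simp
  finally have "grad_f 0 \<bullet> x \<le> (norm (grad_f 0))\<^sup>2 / 2 + (norm x)\<^sup>2 / 2" .
  moreover have "fglob F D x \<le> fglob F D 0 + grad_f 0 \<bullet> x + L / 2 * (norm x)\<^sup>2"
    using fglob_descent[of x 0] by simp
  moreover have "(1 + L) / 2 * (norm x)\<^sup>2 = (norm x)\<^sup>2 / 2 + L / 2 * (norm x)\<^sup>2"
    by (simp add: field_simps)
  ultimately show ?thesis by linarith
qed

end

locale edm_setting = prob_space M + smooth_objective F D gf L
  for M :: "'w measure" and F :: "'n::finite \<Rightarrow> real^'d \<Rightarrow> 'p \<Rightarrow> real" and D gf L +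
  fixes \<xi> :: "'n \<Rightarrow> nat \<Rightarrow> 'w \<Rightarrow> 'p"
    and gF :: "'n \<Rightarrow> real^'d \<Rightarrow> 'p \<Rightarrow> real^'d"
    and W :: "real^'n^'n"
    and \<alpha> \<beta> \<mu> \<sigma> :: real
    and x0 :: "real^'d"
  assumes measurable_sample: "\<And>i s. \<xi> i s \<in> measurable M (D i)"
    and indep_samples: "indep_vars (\<lambda>(i, s). D i) (\<lambda>(i, s). \<xi> i s) UNIV"
    and measurable_gF: "\<And>i. (\<lambda>(x, p). gF i x p) \<in> borel_measurable (borel \<Otimes>\<^sub>M D i)"
    and column_sums: "\<And>j. (\<Sum>i\<in>UNIV. W $ i $ j) = 1"
    and noise: "\<And>s i (x :: 'w \<Rightarrow> real^'d). x \<in> borel_measurable (filt M D \<xi> s) \<Longrightarrow>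
        integrable M (\<lambda>\<omega>. (norm (gF i (x \<omega>) (\<xi> i s \<omega>) - gf i (x \<omega>)))\<^sup>2)
      \<and> (\<forall>j. AE \<omega> in M. real_cond_exp M (filt M D \<xi> s)
                (\<lambda>\<omega>. (gF i (x \<omega>) (\<xi> i s \<omega>) - gf i (x \<omega>)) $ j) \<omega> = 0)
      \<and> (AE \<omega> in M. real_cond_exp M (filt M D \<xi> s)
                (\<lambda>\<omega>. (norm (gF i (x \<omega>) (\<xi> i s \<omega>) - gf i (x \<omega>)))\<^sup>2) \<omega> \<le> \<sigma>\<^sup>2)"
    and PL: "\<And>x. 2 * \<mu> * (fglob F D x - fstar F D)
                 \<le> (norm ((1 / real CARD('n)) *\<^sub>R (\<Sum>i\<in>UNIV. gf i x)))\<^sup>2"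
    and \<alpha>_nonneg: "0 \<le> \<alpha>"
    and \<beta>_ne_1: "\<beta> \<noteq> 1"
begin

abbreviation "samples \<omega> \<equiv> (\<lambda>s i. \<xi> i s \<omega>)"
abbreviation "X_at t \<omega> \<equiv> edmX W \<alpha> \<beta> x0 gF (samples \<omega>) t"
abbreviation "Xprev_at t \<omega> \<equiv> edmXprev W \<alpha> \<beta> x0 gF (samples \<omega>) t"
abbreviation "Mprev_at t \<omega> \<equiv> edmMprev W \<alpha> \<beta> x0 gF (samples \<omega>) t"
abbreviation "z_at t \<omega> \<equiv> edmz W \<alpha> \<beta> x0 gF (samples \<omega>) t"

lemma subalgebra_filt_samples: "subalgebra M (filt M D \<xi> s)"
  by (intro subalgebra_filt measurable_sample)

lemma sigma_finite_subalgebra_filt: "sigma_finite_subalgebra M (filt M D \<xi> s)"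
  using subalgebra_filt_samples finite_measure_axioms
  by (intro finite_measure_subalgebra_is_sigma_finite)
    (simp add: finite_measure_subalgebra_def finite_measure_subalgebra_axioms_def)

lemma measurable_iterates_filt:
  "(\<lambda>\<omega>. X_at t \<omega> k) \<in> borel_measurable (filt M D \<xi> t)"
  "(\<lambda>\<omega>. Xprev_at t \<omega> k) \<in> borel_measurable (filt M D \<xi> t)"
  "(\<lambda>\<omega>. Mprev_at t \<omega> k) \<in> borel_measurable (filt M D \<xi> t)"
proof -
  have "\<xi> i s \<in> measurable (filt M D \<xi> t) (D i)" if "s < t" for i s
    by (intro measurable_filt_sample measurable_sample that)
  from measurable_edm[where \<zeta> = \<xi> and N = "filt M D \<xi> t" and T = t and s = t,
      OF measurable_gF this order_refl]
  show "(\<lambda>\<omega>. X_at t \<omega> k) \<in> borel_measurable (filt M D \<xi> t)"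
    "(\<lambda>\<omega>. Xprev_at t \<omega> k) \<in> borel_measurable (filt M D \<xi> t)"
    "(\<lambda>\<omega>. Mprev_at t \<omega> k) \<in> borel_measurable (filt M D \<xi> t)"
    by blast+
qed

lemma measurable_iterates [measurable]:
  "(\<lambda>\<omega>. X_at t \<omega> k) \<in> borel_measurable M"
  "(\<lambda>\<omega>. Xprev_at t \<omega> k) \<in> borel_measurable M"
  "(\<lambda>\<omega>. Mprev_at t \<omega> k) \<in> borel_measurable M"
  using measurable_from_subalg[OF subalgebra_filt_samples measurable_iterates_filt(1)]
    measurable_from_subalg[OF subalgebra_filt_samples measurable_iterates_filt(2)]
    measurable_from_subalg[OF subalgebra_filt_samples measurable_iterates_filt(3)]
  by blast+

lemma sq_integrable_gf:
  assumes "sq_integrable M u"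
  shows "sq_integrable M (\<lambda>\<omega>. gf k (u \<omega>))"
proof -
  from assms have [measurable]: "u \<in> borel_measurable M"
    and int: "integrable M (\<lambda>\<omega>. L\<^sup>2 * (norm (u \<omega>))\<^sup>2)"
    by (auto simp: sq_integrable_def)
  have "integrable M (\<lambda>\<omega>. (norm (gf k (u \<omega>) - gf k 0))\<^sup>2)"
  proof (rule Bochner_Integration.integrable_bound[OF int])
    show "AE \<omega> in M. norm ((norm (gf k (u \<omega>) - gf k 0))\<^sup>2) \<le> norm (L\<^sup>2 * (norm (u \<omega>))\<^sup>2)"
    proof (intro AE_I2)
      fix \<omega>
      have "(norm (gf k (u \<omega>) - gf k 0))\<^sup>2 \<le> (L * norm (u \<omega>))\<^sup>2"
        using gf_lipschitz[of k "u \<omega>" 0] by (intro power_mono) auto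
      then show "norm ((norm (gf k (u \<omega>) - gf k 0))\<^sup>2) \<le> norm (L\<^sup>2 * (norm (u \<omega>))\<^sup>2)"
        by (simp add: power_mult_distrib)
    qed
  qed measurable
  then have "sq_integrable M (\<lambda>\<omega>. (gf k (u \<omega>) - gf k 0) + gf k 0)"
    by (intro sq_integrable_add sq_integrable_const) (simp add: sq_integrable_def)
  then show ?thesis by simp
qed

lemma sq_integrable_gradient_noise:
  "sq_integrable M (\<lambda>\<omega>. gF k (X_at t \<omega> k) (\<xi> k t \<omega>) - gf k (X_at t \<omega> k))"
proof -
  have "(\<lambda>\<omega>. gF k (X_at t \<omega> k) (\<xi> k t \<omega>)) \<in> borel_measurable M"
    by (rule measurable_comp_pair[OF measurable_gF measurable_iterates(1) measurable_sample])
  with noise[OF measurable_iterates_filt(1)] show ?thesis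
    unfolding sq_integrable_def by auto
qed

lemma sq_integrable_iterates:
  "sq_integrable M (\<lambda>\<omega>. X_at t \<omega> k)"
  "sq_integrable M (\<lambda>\<omega>. Xprev_at t \<omega> k)"
  "sq_integrable M (\<lambda>\<omega>. Mprev_at t \<omega> k)"
proof -
  have "\<forall>k. sq_integrable M (\<lambda>\<omega>. X_at t \<omega> k) \<and> sq_integrable M (\<lambda>\<omega>. Xprev_at t \<omega> k)
          \<and> sq_integrable M (\<lambda>\<omega>. Mprev_at t \<omega> k)"
  proof (induction t)
    case 0
    then show ?case by (simp add: edm_0 sq_integrable_const)
  next
    case (Suc t)
    then have X: "sq_integrable M (\<lambda>\<omega>. X_at t \<omega> k)" and P: "sq_integrable M (\<lambda>\<omega>. Xprev_at t \<omega> k)"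
      and M: "sq_integrable M (\<lambda>\<omega>. Mprev_at t \<omega> k)" for k
      by auto
    have "sq_integrable M (\<lambda>\<omega>. gF k (X_at t \<omega> k) (\<xi> k t \<omega>))" for k
      using sq_integrable_add[OF sq_integrable_gf[OF X[of k], of k]
          sq_integrable_gradient_noise[where k = k and t = t]]
      by simp
    with M have M_Suc: "sq_integrable M (\<lambda>\<omega>. Mprev_at (Suc t) \<omega> k)" for k
      unfolding edm_Suc(2) by (intro sq_integrable_add sq_integrable_scaleR)
    have "sq_integrable M (\<lambda>\<omega>. X_at (Suc t) \<omega> k)" for k
      unfolding edm_Suc(3) mix_def using X P M M_Suc
      by (intro sq_integrable_sum sq_integrable_scaleR sq_integrable_add sq_integrable_diff)
    with X M_Suc show ?case by (simp add: edm_Suc(1))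
  qed
  then show "sq_integrable M (\<lambda>\<omega>. X_at t \<omega> k)" "sq_integrable M (\<lambda>\<omega>. Xprev_at t \<omega> k)"
    "sq_integrable M (\<lambda>\<omega>. Mprev_at t \<omega> k)"
    by auto
qed

lemma sq_integrable_z: "sq_integrable M (z_at t)"
  unfolding edmz_eq[OF column_sums \<beta>_ne_1]
  by (intro sq_integrable_scaleR sq_integrable_diff sq_integrable_avg sq_integrable_iterates)

lemma integrable_fglob_gap:
  assumes "sq_integrable M u"
  shows "integrable M (\<lambda>\<omega>. fglob F D (u \<omega>) - fstar F D)"
proof (rule Bochner_Integration.integrable_bound)
  from assms have [measurable]: "u \<in> borel_measurable M" and "integrable M (\<lambda>\<omega>. (norm (u \<omega>))\<^sup>2)"
    by (auto simp: sq_integrable_def)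
  then show "integrable M (\<lambda>\<omega>. fglob F D 0 - fstar F D + (norm (grad_f 0))\<^sup>2 / 2
                              + (1 + L) / 2 * (norm (u \<omega>))\<^sup>2)"
    by auto
  show "(\<lambda>\<omega>. fglob F D (u \<omega>) - fstar F D) \<in> borel_measurable M" by measurable
  show "AE \<omega> in M. norm (fglob F D (u \<omega>) - fstar F D)
          \<le> norm (fglob F D 0 - fstar F D + (norm (grad_f 0))\<^sup>2 / 2 + (1 + L) / 2 * (norm (u \<omega>))\<^sup>2)"
  proof (intro AE_I2)
    fix \<omega>
    have "0 \<le> fglob F D (u \<omega>) - fstar F D" using fstar_le_fglob by simp
    with fglob_gap_le_quadratic[of "u \<omega>"]
    show "norm (fglob F D (u \<omega>) - fstar F D)
          \<le> norm (fglob F D 0 - fstar F D + (norm (grad_f 0))\<^sup>2 / 2 + (1 + L) / 2 * (norm (u \<omega>))\<^sup>2)"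
      by simp
  qed
qed

section \<open>Gradient noise\<close>

definition sample_noise :: "real^'d \<Rightarrow> 'n \<Rightarrow> nat \<Rightarrow> 'w \<Rightarrow> real^'d" where
  "sample_noise c k s \<omega> = gF k c (\<xi> k s \<omega>) - gf k c"

lemma measurable_sample_noise [measurable]: "sample_noise c k s \<in> borel_measurable M"
proof -
  have "(\<lambda>\<omega>. gF k c (\<xi> k s \<omega>)) \<in> borel_measurable M"
    by (rule measurable_comp_pair[OF measurable_gF _ measurable_sample]) simp
  then show ?thesis unfolding sample_noise_def[abs_def] by measurable
qed

lemma sample_noise_moments:
  "sq_integrable M (sample_noise c k s)"
  "(\<integral>\<omega>. sample_noise c k s \<omega> $ j \<partial>M) = 0"
  "(\<integral>\<omega>. (norm (sample_noise c k s \<omega>))\<^sup>2 \<partial>M) \<le> \<sigma>\<^sup>2"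
proof -
  interpret S: sigma_finite_subalgebra M "filt M D \<xi> s" by (rule sigma_finite_subalgebra_filt)
  have "(\<lambda>\<omega>. c) \<in> borel_measurable (filt M D \<xi> s)" by simp
  note cond = noise[OF this, of k]
  then have int: "integrable M (\<lambda>\<omega>. (norm (sample_noise c k s \<omega>))\<^sup>2)"
    by (simp add: sample_noise_def)
  then show sq: "sq_integrable M (sample_noise c k s)" by (simp add: sq_integrable_def)
  have "integrable M (\<lambda>\<omega>. sample_noise c k s \<omega> $ j)"
    by (intro sq_integrable_imp_integrable sq_integrable_component sq)
  then have "(\<integral>\<omega>. sample_noise c k s \<omega> $ j \<partial>M)
      = (\<integral>\<omega>. real_cond_exp M (filt M D \<xi> s) (\<lambda>\<omega>. sample_noise c k s \<omega> $ j) \<omega> \<partial>M)"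
    by (simp add: S.real_cond_exp_int(2))
  also have "\<dots> = 0"
    using cond by (subst integral_cong_AE[where g = "\<lambda>_. 0"]) (auto simp: sample_noise_def)
  finally show "(\<integral>\<omega>. sample_noise c k s \<omega> $ j \<partial>M) = 0" .
  have "(\<integral>\<omega>. (norm (sample_noise c k s \<omega>))\<^sup>2 \<partial>M)
      = (\<integral>\<omega>. real_cond_exp M (filt M D \<xi> s) (\<lambda>\<omega>. (norm (sample_noise c k s \<omega>))\<^sup>2) \<omega> \<partial>M)"
    using int by (simp add: S.real_cond_exp_int(2))
  also have "\<dots> \<le> (\<integral>\<omega>. \<sigma>\<^sup>2 \<partial>M)"
    using cond S.real_cond_exp_int(1)[OF int]
    by (intro integral_mono_AE) (auto simp: sample_noise_def)
  finally show "(\<integral>\<omega>. (norm (sample_noise c k s \<omega>))\<^sup>2 \<partial>M) \<le> \<sigma>\<^sup>2" by (simp add: prob_space)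
qed

lemma integral_inner_sample_noise: "(\<integral>\<omega>. v \<bullet> sample_noise c k s \<omega> \<partial>M) = 0"
proof -
  have "integrable M (\<lambda>\<omega>. sample_noise c k s \<omega> $ j)" for j
    by (intro sq_integrable_imp_integrable sq_integrable_component sample_noise_moments(1))
  then show ?thesis
    by (simp add: inner_vec_def integral_sum sample_noise_moments(2))
qed

lemma indep_var_samples:
  assumes "k \<noteq> l"
  shows "indep_var (D k) (\<xi> k s) (D l) (\<xi> l s)"
proof -
  let ?D = "\<lambda>(i, s). D i"
  have "indep_var (PiM {(k, s)} ?D) (\<lambda>\<omega>. restrict (\<lambda>p. (\<lambda>(i, s). \<xi> i s) p \<omega>) {(k, s)})
                  (PiM {(l, s)} ?D) (\<lambda>\<omega>. restrict (\<lambda>p. (\<lambda>(i, s). \<xi> i s) p \<omega>) {(l, s)})"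
    using assms by (intro indep_var_restrict[OF indep_samples]) auto
  then have "indep_var (D k) ((\<lambda>f. f (k, s)) \<circ> (\<lambda>\<omega>. restrict (\<lambda>p. (\<lambda>(i, s). \<xi> i s) p \<omega>) {(k, s)}))
                  (D l) ((\<lambda>f. f (l, s)) \<circ> (\<lambda>\<omega>. restrict (\<lambda>p. (\<lambda>(i, s). \<xi> i s) p \<omega>) {(l, s)}))"
    by (rule indep_var_compose)
      (use measurable_component_singleton[of "(k, s)" "{(k, s)}" ?D]
           measurable_component_singleton[of "(l, s)" "{(l, s)}" ?D] in auto)
  then show ?thesis by (simp add: comp_def)
qed

lemma integral_inner_sample_noise_indep:
  assumes "k \<noteq> l"
  shows "(\<integral>\<omega>. sample_noise c k s \<omega> \<bullet> sample_noise c' l s \<omega> \<partial>M) = 0"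
proof -
  have "(\<integral>\<omega>. sample_noise c k s \<omega> $ j * sample_noise c' l s \<omega> $ j \<partial>M) = 0" for j
  proof -
    have meas: "(\<lambda>p. (gF q b p - gf q b) $ j) \<in> borel_measurable (D q)" for q b
    proof -
      have "(\<lambda>p. gF q b p) \<in> borel_measurable (D q)"
        using measurable_comp_pair[OF measurable_gF, where f = "\<lambda>_. b" and N = "D q" and h = "\<lambda>p. p"]
        by simp
      then have "(\<lambda>p. gF q b p - gf q b) \<in> borel_measurable (D q)" by measurable
      from measurable_compose[OF this borel_measurable_nth] show ?thesis by simp
    qed
    have "indep_var borel ((\<lambda>p. (gF k c p - gf k c) $ j) \<circ> \<xi> k s)
                    borel ((\<lambda>p. (gF l c' p - gf l c') $ j) \<circ> \<xi> l s)"
      by (rule indep_var_compose[OF indep_var_samples[OF assms] meas meas])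
    then have "indep_var borel (\<lambda>\<omega>. sample_noise c k s \<omega> $ j) borel (\<lambda>\<omega>. sample_noise c' l s \<omega> $ j)"
      by (simp add: comp_def sample_noise_def[abs_def])
    from indep_var_lebesgue_integral[OF this] show ?thesis
      by (simp add: sample_noise_moments(2) sq_integrable_imp_integrable sq_integrable_component
          sample_noise_moments(1))
  qed
  moreover have "integrable M (\<lambda>\<omega>. sample_noise c k s \<omega> $ j * sample_noise c' l s \<omega> $ j)" for j
    using sq_integrable_inner[OF sq_integrable_component sq_integrable_component, 
        OF sample_noise_moments(1) sample_noise_moments(1)] by simp
  ultimately show ?thesis by (simp add: inner_vec_def integral_sum)
qed

lemma integral_norm_avg_sample_noise_sq_le:
  "(\<integral>\<omega>. (norm (avg (\<lambda>k. sample_noise (c k) k s \<omega>)))\<^sup>2 \<partial>M) \<le> \<sigma>\<^sup>2 / real CARD('n)"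
proof -
  let ?n = "real CARD('n)" and ?e = "\<lambda>k. sample_noise (c k) k s"
  have int: "integrable M (\<lambda>\<omega>. ?e k \<omega> \<bullet> ?e l \<omega>)" for k l
    by (intro sq_integrable_inner sample_noise_moments(1))
  have cross: "(\<integral>\<omega>. ?e k \<omega> \<bullet> ?e l \<omega> \<partial>M) = (if l = k then (\<integral>\<omega>. (norm (?e k \<omega>))\<^sup>2 \<partial>M) else 0)"
    for k l
    using integral_inner_sample_noise_indep[of k l] by (simp add: power2_norm_eq_inner)
  have "(norm (avg (\<lambda>k. ?e k \<omega>)))\<^sup>2 = (1 / ?n)\<^sup>2 * (\<Sum>k\<in>UNIV. \<Sum>l\<in>UNIV. ?e k \<omega> \<bullet> ?e l \<omega>)" for \<omega>
    unfolding power2_norm_eq_inner avg_def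
    by (simp add: inner_sum_left inner_sum_right inner_commute power2_eq_square flip: sum_divide_distrib)
  then have "(\<integral>\<omega>. (norm (avg (\<lambda>k. ?e k \<omega>)))\<^sup>2 \<partial>M)
      = (1 / ?n)\<^sup>2 * (\<Sum>k\<in>UNIV. \<Sum>l\<in>UNIV. (\<integral>\<omega>. ?e k \<omega> \<bullet> ?e l \<omega> \<partial>M))"
    using int by (simp add: integral_sum)
  also have "\<dots> = (1 / ?n)\<^sup>2 * (\<Sum>k\<in>UNIV. (\<integral>\<omega>. (norm (?e k \<omega>))\<^sup>2 \<partial>M))"
    by (simp add: cross)
  also have "\<dots> \<le> (1 / ?n)\<^sup>2 * (\<Sum>k\<in>(UNIV::'n set). \<sigma>\<^sup>2)"
    by (intro mult_left_mono sum_mono sample_noise_moments(3)) simp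
  also have "\<dots> = \<sigma>\<^sup>2 / ?n" by (simp add: power2_eq_square)
  finally show ?thesis .
qed

lemma integral_noise_terms_at_fixed_point_le:
  fixes c :: "'n \<Rightarrow> real^'d" and s :: nat
  defines "e \<equiv> \<lambda>\<omega>. avg (\<lambda>k. sample_noise (c k) k s \<omega>)"
  shows "(\<integral>\<omega>. - \<alpha> * (v \<bullet> e \<omega>) + L * \<alpha>\<^sup>2 * (w \<bullet> e \<omega>) + L * \<alpha>\<^sup>2 / 2 * (norm (e \<omega>))\<^sup>2 \<partial>M)
           \<le> \<alpha>\<^sup>2 * L * \<sigma>\<^sup>2 / (2 * real CARD('n))"
proof -
  have e: "sq_integrable M e"
    unfolding e_def by (intro sq_integrable_avg sample_noise_moments(1))
  have inner_0: "(\<integral>\<omega>. u \<bullet> e \<omega> \<partial>M) = 0" for u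
  proof -
    have "integrable M (\<lambda>\<omega>. u \<bullet> sample_noise (c k) k s \<omega>)" for k
      by (intro sq_integrable_inner sq_integrable_const sample_noise_moments(1))
    then show ?thesis
      by (simp add: e_def avg_def inner_sum_right integral_sum integral_inner_sample_noise)
  qed
  have int: "integrable M (\<lambda>\<omega>. u \<bullet> e \<omega>)" "integrable M (\<lambda>\<omega>. (norm (e \<omega>))\<^sup>2)" for u
    using sq_integrable_inner[OF sq_integrable_const e] e by (auto simp: sq_integrable_def)
  have "(\<integral>\<omega>. - \<alpha> * (v \<bullet> e \<omega>) + L * \<alpha>\<^sup>2 * (w \<bullet> e \<omega>) + L * \<alpha>\<^sup>2 / 2 * (norm (e \<omega>))\<^sup>2 \<partial>M)
      = L * \<alpha>\<^sup>2 / 2 * (\<integral>\<omega>. (norm (e \<omega>))\<^sup>2 \<partial>M)"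
    using int by (simp add: inner_0)
  also have "\<dots> \<le> L * \<alpha>\<^sup>2 / 2 * (\<sigma>\<^sup>2 / real CARD('n))"
    using integral_norm_avg_sample_noise_sq_le L_nonneg unfolding e_def
    by (intro mult_left_mono) auto
  finally show ?thesis by (simp add: mult_ac)
qed

definition past_samples :: "nat \<Rightarrow> 'w \<Rightarrow> 'n \<times> nat \<Rightarrow> 'p" where
  "past_samples t \<omega> = restrict (\<lambda>p. (\<lambda>(i, s). \<xi> i s) p \<omega>) {p. snd p < t}"

definition current_samples :: "nat \<Rightarrow> 'w \<Rightarrow> 'n \<times> nat \<Rightarrow> 'p" where
  "current_samples t \<omega> = restrict (\<lambda>p. (\<lambda>(i, s). \<xi> i s) p \<omega>) {p. snd p = t}"

abbreviation sample_space :: "('n \<times> nat) set \<Rightarrow> ('n \<times> nat \<Rightarrow> 'p) measure" where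
  "sample_space P \<equiv> PiM P (\<lambda>(i, s). D i)"

lemma indep_past_current_samples:
  "indep_var (sample_space {p. snd p < t}) (past_samples t)
             (sample_space {p. snd p = t}) (current_samples t)"
  unfolding past_samples_def[abs_def] current_samples_def[abs_def]
  by (rule indep_var_restrict[OF indep_samples]) auto

lemma edm_past_samples:
  "edm W \<alpha> \<beta> x0 gF (\<lambda>s i. past_samples t \<omega> (i, s)) t = edm W \<alpha> \<beta> x0 gF (samples \<omega>) t"
  by (rule edm_cong_past) (simp add: past_samples_def fun_eq_iff)

lemma measurable_edmX_past:
  "(\<lambda>h. edmX W \<alpha> \<beta> x0 gF (\<lambda>s i. h (i, s)) t k) \<in> borel_measurable (sample_space {p. snd p < t})"
  "(\<lambda>h. edmXprev W \<alpha> \<beta> x0 gF (\<lambda>s i. h (i, s)) t k) \<in> borel_measurable (sample_space {p. snd p < t})"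
proof -
  have "(\<lambda>h. h (i, s)) \<in> measurable (sample_space {p. snd p < t}) (D i)" if "s < t" for i s
    using measurable_component_singleton[of "(i, s)" "{p. snd p < t}" "\<lambda>(i, s). D i"] that by simp
  from measurable_edm[where \<zeta> = "\<lambda>i s h. h (i, s)" and T = t and s = t, OF measurable_gF this order_refl]
  show "(\<lambda>h. edmX W \<alpha> \<beta> x0 gF (\<lambda>s i. h (i, s)) t k) \<in> borel_measurable (sample_space {p. snd p < t})"
    "(\<lambda>h. edmXprev W \<alpha> \<beta> x0 gF (\<lambda>s i. h (i, s)) t k) \<in> borel_measurable (sample_space {p. snd p < t})"
    by blast+
qed

text \<open>The terms of the one-step inequality that involve the gradient noise, as a function of
  the samples before step t and of the samples at step t; the two arguments are independent.\<close>
definition noise_terms :: "nat \<Rightarrow> (nat \<Rightarrow> 'n \<Rightarrow> 'p) \<Rightarrow> ('n \<Rightarrow> 'p) \<Rightarrow> real" where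
  "noise_terms t Xi cur =
     (let X = edmX W \<alpha> \<beta> x0 gF Xi t; e = avg (\<lambda>k. gF k (X k) (cur k) - gf k (X k))
      in - \<alpha> * (grad_f (edmz W \<alpha> \<beta> x0 gF Xi t) \<bullet> e)
         + L * \<alpha>\<^sup>2 * (avg (\<lambda>i. gf i (X i)) \<bullet> e) + L * \<alpha>\<^sup>2 / 2 * (norm e)\<^sup>2)"

lemma integrable_noise_terms: "integrable M (\<lambda>\<omega>. noise_terms t (samples \<omega>) (\<lambda>k. \<xi> k t \<omega>))"
proof -
  define e where "e \<omega> = avg (\<lambda>k. gF k (X_at t \<omega> k) (\<xi> k t \<omega>) - gf k (X_at t \<omega> k))" for \<omega>
  define b where "b \<omega> = avg (\<lambda>i. gf i (X_at t \<omega> i))" for \<omega>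
  have e: "sq_integrable M e"
    unfolding e_def by (intro sq_integrable_avg sq_integrable_gradient_noise)
  have a: "sq_integrable M (\<lambda>\<omega>. grad_f (z_at t \<omega>))"
    unfolding grad_f_eq_avg by (intro sq_integrable_avg sq_integrable_gf sq_integrable_z)
  have b: "sq_integrable M b"
    unfolding b_def by (intro sq_integrable_avg sq_integrable_gf sq_integrable_iterates)
  have "integrable M (\<lambda>\<omega>. - \<alpha> * (grad_f (z_at t \<omega>) \<bullet> e \<omega>) + L * \<alpha>\<^sup>2 * (b \<omega> \<bullet> e \<omega>)
                          + L * \<alpha>\<^sup>2 / 2 * (norm (e \<omega>))\<^sup>2)"
    using sq_integrable_inner[OF a e] sq_integrable_inner[OF b e] e
    by (intro Bochner_Integration.integrable_add Bochner_Integration.integrable_mult_right)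
      (auto simp: sq_integrable_def)
  then show ?thesis unfolding noise_terms_def Let_def e_def b_def .
qed

lemma measurable_noise_terms:
  "(\<lambda>hc. noise_terms t (\<lambda>s i. fst hc (i, s)) (\<lambda>k. snd hc (k, t)))
     \<in> borel_measurable (sample_space {p. snd p < t} \<Otimes>\<^sub>M sample_space {p. snd p = t})"
    (is "_ \<in> borel_measurable (?H \<Otimes>\<^sub>M ?C)")
proof -
  have [measurable]: "(\<lambda>hc. edmX W \<alpha> \<beta> x0 gF (\<lambda>s i. fst hc (i, s)) t k) \<in> borel_measurable (?H \<Otimes>\<^sub>M ?C)"
    "(\<lambda>hc. edmXprev W \<alpha> \<beta> x0 gF (\<lambda>s i. fst hc (i, s)) t k) \<in> borel_measurable (?H \<Otimes>\<^sub>M ?C)" for k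
    using measurable_compose[OF measurable_fst measurable_edmX_past(1)[where k = k]]
      measurable_compose[OF measurable_fst measurable_edmX_past(2)[where k = k]] by blast+
  have "(\<lambda>c. c (k, t)) \<in> measurable ?C (D k)" for k
    using measurable_component_singleton[of "(k, t)" "{p. snd p = t}" "\<lambda>(i, s). D i"] by simp
  then have current: "(\<lambda>hc. snd hc (k, t)) \<in> measurable (?H \<Otimes>\<^sub>M ?C) (D k)" for k
    using measurable_compose[OF measurable_snd] by blast
  have [measurable]: "(\<lambda>hc. gF k (edmX W \<alpha> \<beta> x0 gF (\<lambda>s i. fst hc (i, s)) t k) (snd hc (k, t)))
      \<in> borel_measurable (?H \<Otimes>\<^sub>M ?C)" for k
    by (rule measurable_comp_pair[OF measurable_gF _ current]) measurable
  show ?thesis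
    unfolding noise_terms_def Let_def edmz_eq[OF column_sums \<beta>_ne_1] avg_def by measurable
qed

lemma integral_noise_terms_le:
  "(\<integral>\<omega>. noise_terms t (samples \<omega>) (\<lambda>k. \<xi> k t \<omega>) \<partial>M) \<le> \<alpha>\<^sup>2 * L * \<sigma>\<^sup>2 / (2 * real CARD('n))"
proof -
  define \<Psi> where "\<Psi> hc = noise_terms t (\<lambda>s i. fst hc (i, s)) (\<lambda>k. snd hc (k, t))" for hc
  have current: "current_samples t \<omega> (k, t) = \<xi> k t \<omega>" for \<omega> k
    by (simp add: current_samples_def)
  have \<Psi>_samples: "\<Psi> (past_samples t \<omega>, current_samples t \<omega>) = noise_terms t (samples \<omega>) (\<lambda>k. \<xi> k t \<omega>)"
    for \<omega>
    by (simp add: \<Psi>_def current noise_terms_def edmz_eq[OF column_sums \<beta>_ne_1] edmX_def edmXprev_def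
        edm_past_samples)
  have "(\<integral>\<omega>. \<Psi> (h, current_samples t \<omega>) \<partial>M) \<le> \<alpha>\<^sup>2 * L * \<sigma>\<^sup>2 / (2 * real CARD('n))" for h
    using integral_noise_terms_at_fixed_point_le[where c = "edmX W \<alpha> \<beta> x0 gF (\<lambda>s i. h (i, s)) t"
        and s = t and v = "grad_f (edmz W \<alpha> \<beta> x0 gF (\<lambda>s i. h (i, s)) t)"
        and w = "avg (\<lambda>i. gf i (edmX W \<alpha> \<beta> x0 gF (\<lambda>s i. h (i, s)) t i))"]
    by (simp add: \<Psi>_def noise_terms_def Let_def current sample_noise_def)
  then have "(\<integral>\<omega>. \<Psi> (past_samples t \<omega>, current_samples t \<omega>) \<partial>M)
      \<le> \<alpha>\<^sup>2 * L * \<sigma>\<^sup>2 / (2 * real CARD('n))"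
    using measurable_noise_terms[of t, folded \<Psi>_def[abs_def]] integrable_noise_terms L_nonneg
    by (intro integral_indep_var_le[OF indep_past_current_samples]) (auto simp: \<Psi>_samples)
  then show ?thesis by (simp add: \<Psi>_samples)
qed

section \<open>The descent inequality\<close>

lemma fglob_z_Suc_le:
  "fglob F D (z_at (Suc t) \<omega>) - fstar F D
     \<le> (1 - \<alpha> * \<mu>) * (fglob F D (z_at t \<omega>) - fstar F D)
       - \<alpha> * (1 - \<alpha> * L) / 2 * (norm (avg (\<lambda>i. gf i (X_at t \<omega> i))))\<^sup>2
       + \<alpha> * L\<^sup>2 / (2 * real CARD('n)) * (\<Sum>i\<in>UNIV. (norm (X_at t \<omega> i - avg (X_at t \<omega>)))\<^sup>2)
       + \<alpha> ^ 3 * L\<^sup>2 * \<beta>\<^sup>2 / (2 * (1 - \<beta>)\<^sup>2) * (norm (avg (Mprev_at t \<omega>)))\<^sup>2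
       + noise_terms t (samples \<omega>) (\<lambda>k. \<xi> k t \<omega>)"
proof -
  let ?z = "z_at t \<omega>" and ?x = "X_at t \<omega>" and ?n = "real CARD('n)"
  let ?consensus = "\<Sum>i\<in>UNIV. (norm (?x i - avg ?x))\<^sup>2" and ?m = "(norm (avg (Mprev_at t \<omega>)))\<^sup>2"
  define b where "b = avg (\<lambda>i. gf i (?x i))"
  define e where "e = avg (\<lambda>k. gF k (?x k) (\<xi> k t \<omega>) - gf k (?x k))"
  have z_Suc: "z_at (Suc t) \<omega> = ?z - \<alpha> *\<^sub>R (b + e)"
    unfolding edmz_Suc[OF column_sums \<beta>_ne_1] b_def e_def by (simp flip: avg_add)
  have noise: "noise_terms t (samples \<omega>) (\<lambda>k. \<xi> k t \<omega>)
      = - \<alpha> * (grad_f ?z \<bullet> e) + L * \<alpha>\<^sup>2 * (b \<bullet> e) + L * \<alpha>\<^sup>2 / 2 * (norm e)\<^sup>2"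
    by (simp add: noise_terms_def Let_def b_def e_def)
  have "(norm (grad_f ?z - b))\<^sup>2 \<le> L\<^sup>2 * ((norm (?z - avg ?x))\<^sup>2 + 1 / ?n * ?consensus)"
    unfolding b_def avg_def by (rule average_gradient_dist_sq_le[OF gf_lipschitz])
  moreover have "(norm (?z - avg ?x))\<^sup>2 = (\<alpha> * \<beta> / (1 - \<beta>))\<^sup>2 * ?m"
    unfolding edmz_minus_avg_edmX[OF column_sums \<beta>_ne_1]
    by (simp add: power_mult_distrib power_divide power2_abs)
  ultimately have "\<alpha> / 2 * (norm (grad_f ?z - b))\<^sup>2
      \<le> \<alpha> / 2 * (L\<^sup>2 * ((\<alpha> * \<beta> / (1 - \<beta>))\<^sup>2 * ?m + 1 / ?n * ?consensus))"
    using \<alpha>_nonneg by (intro mult_left_mono) auto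
  also have "\<dots> = \<alpha> * L\<^sup>2 / (2 * ?n) * ?consensus + \<alpha> ^ 3 * L\<^sup>2 * \<beta>\<^sup>2 / (2 * (1 - \<beta>)\<^sup>2) * ?m"
  proof -
    have "(1 - \<beta>)\<^sup>2 \<noteq> 0" using \<beta>_ne_1 by simp
    then show ?thesis by (simp add: power_divide field_simps power3_eq_cube power2_eq_square[of \<alpha>])
  qed
  finally show ?thesis
    unfolding z_Suc noise b_def[symmetric]
    using pl_descent_step[OF fglob_descent PL \<alpha>_nonneg, of ?z b e] by linarith
qed

lemma expected_descent:
  "(\<integral>\<omega>. fglob F D (z_at (Suc t) \<omega>) - fstar F D \<partial>M)
     \<le> (1 - \<alpha> * \<mu>) * (\<integral>\<omega>. fglob F D (z_at t \<omega>) - fstar F D \<partial>M)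
       - \<alpha> * (1 - \<alpha> * L) / 2 * (\<integral>\<omega>. (norm (avg (\<lambda>i. gf i (X_at t \<omega> i))))\<^sup>2 \<partial>M)
       + \<alpha> * L\<^sup>2 / (2 * real CARD('n))
           * (\<integral>\<omega>. (\<Sum>i\<in>UNIV. (norm (X_at t \<omega> i - avg (X_at t \<omega>)))\<^sup>2) \<partial>M)
       + \<alpha> ^ 3 * L\<^sup>2 * \<beta>\<^sup>2 / (2 * (1 - \<beta>)\<^sup>2) * (\<integral>\<omega>. (norm (avg (Mprev_at t \<omega>)))\<^sup>2 \<partial>M)
       + \<alpha>\<^sup>2 * L * \<sigma>\<^sup>2 / (2 * real CARD('n))"
proof -
  have gap: "integrable M (\<lambda>\<omega>. fglob F D (z_at s \<omega>) - fstar F D)" for s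
    by (rule integrable_fglob_gap[OF sq_integrable_z])
  have "sq_integrable M (\<lambda>\<omega>. avg (\<lambda>i. gf i (X_at t \<omega> i)))"
    by (intro sq_integrable_avg sq_integrable_gf sq_integrable_iterates)
  then have grad: "integrable M (\<lambda>\<omega>. (norm (avg (\<lambda>i. gf i (X_at t \<omega> i))))\<^sup>2)"
    by (simp add: sq_integrable_def)
  have "sq_integrable M (\<lambda>\<omega>. X_at t \<omega> i - avg (X_at t \<omega>))" for i
    by (intro sq_integrable_diff sq_integrable_avg sq_integrable_iterates)
  then have consensus: "integrable M (\<lambda>\<omega>. \<Sum>i\<in>UNIV. (norm (X_at t \<omega> i - avg (X_at t \<omega>)))\<^sup>2)"
    by (auto simp: sq_integrable_def)
  have "sq_integrable M (\<lambda>\<omega>. avg (Mprev_at t \<omega>))"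
    by (intro sq_integrable_avg sq_integrable_iterates)
  then have momentum: "integrable M (\<lambda>\<omega>. (norm (avg (Mprev_at t \<omega>)))\<^sup>2)"
    by (simp add: sq_integrable_def)
  have "(\<integral>\<omega>. fglob F D (z_at (Suc t) \<omega>) - fstar F D \<partial>M)
      \<le> (\<integral>\<omega>. (1 - \<alpha> * \<mu>) * (fglob F D (z_at t \<omega>) - fstar F D)
             - \<alpha> * (1 - \<alpha> * L) / 2 * (norm (avg (\<lambda>i. gf i (X_at t \<omega> i))))\<^sup>2
             + \<alpha> * L\<^sup>2 / (2 * real CARD('n)) * (\<Sum>i\<in>UNIV. (norm (X_at t \<omega> i - avg (X_at t \<omega>)))\<^sup>2)
             + \<alpha> ^ 3 * L\<^sup>2 * \<beta>\<^sup>2 / (2 * (1 - \<beta>)\<^sup>2) * (norm (avg (Mprev_at t \<omega>)))\<^sup>2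
             + noise_terms t (samples \<omega>) (\<lambda>k. \<xi> k t \<omega>) \<partial>M)"
    using gap grad consensus momentum integrable_noise_terms
    by (intro integral_mono fglob_z_Suc_le) auto
  also have "\<dots> = (1 - \<alpha> * \<mu>) * (\<integral>\<omega>. fglob F D (z_at t \<omega>) - fstar F D \<partial>M)
       - \<alpha> * (1 - \<alpha> * L) / 2 * (\<integral>\<omega>. (norm (avg (\<lambda>i. gf i (X_at t \<omega> i))))\<^sup>2 \<partial>M)
       + \<alpha> * L\<^sup>2 / (2 * real CARD('n))
           * (\<integral>\<omega>. (\<Sum>i\<in>UNIV. (norm (X_at t \<omega> i - avg (X_at t \<omega>)))\<^sup>2) \<partial>M)
       + \<alpha> ^ 3 * L\<^sup>2 * \<beta>\<^sup>2 / (2 * (1 - \<beta>)\<^sup>2) * (\<integral>\<omega>. (norm (avg (Mprev_at t \<omega>)))\<^sup>2 \<partial>M)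
       + (\<integral>\<omega>. noise_terms t (samples \<omega>) (\<lambda>k. \<xi> k t \<omega>) \<partial>M)"
    using gap grad consensus momentum integrable_noise_terms by simp
  finally show ?thesis using integral_noise_terms_le[of t] by linarith
qed

end

theorem lemma2:
  fixes M :: "'w measure"
    and D :: "'n::finite \<Rightarrow> 'p measure"
    and \<xi> :: "'n \<Rightarrow> nat \<Rightarrow> 'w \<Rightarrow> 'p"
    and F :: "'n \<Rightarrow> real^'d \<Rightarrow> 'p \<Rightarrow> real"
    and gF :: "'n \<Rightarrow> real^'d \<Rightarrow> 'p \<Rightarrow> real^'d"
    and gf :: "'n \<Rightarrow> real^'d \<Rightarrow> real^'d"
    and W :: "real^'n^'n"
    and \<alpha> \<beta> L \<mu> \<sigma> :: real
    and x0 :: "real^'d"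
    and t :: nat
  assumes
    \<comment> \<open>probability space, data distributions, samples\<close>
    prob: "prob_space M"
    and D_prob: "\<And>i. prob_space (D i)"
    and \<xi>_meas: "\<And>i s. \<xi> i s \<in> measurable M (D i)"
    and \<xi>_distr: "\<And>i s. distr M (D i) (\<xi> i s) = D i"
    and \<xi>_indep: "prob_space.indep_vars M (\<lambda>(i, s). D i) (\<lambda>(i, s). \<xi> i s) UNIV"
    \<comment> \<open>losses, their x-gradients, and f_i = E F_i\<close>
    and F_int: "\<And>i x. integrable (D i) (F i x)"
    and F_grad: "\<And>i x p. p \<in> space (D i) \<Longrightarrow>
                   ((\<lambda>y. F i y p) has_derivative (\<lambda>h. gF i x p \<bullet> h)) (at x)"
    and gF_meas: "\<And>i. (\<lambda>(x, p). gF i x p) \<in> borel_measurable (borel \<Otimes>\<^sub>M D i)"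
    and f_grad: "\<And>i x. (floc F D i has_derivative (\<lambda>h. gf i x \<bullet> h)) (at x)"
    \<comment> \<open>(A1)\<close>
    and W_sym: "transpose W = W"
    and W_stoch: "\<And>i. (\<Sum>j\<in>UNIV. W $ i $ j) = 1"
    and W_diag: "\<And>i. W $ i $ i > 0"
    and W_nonneg: "\<And>i j. W $ i $ j \<ge> 0"
    and W_eig: "\<And>c v. v \<noteq> 0 \<Longrightarrow> W *v v = c *\<^sub>R v \<Longrightarrow> c > 0"
    and W_gap: "onorm (\<lambda>v. (W - (\<chi> i j. 1 / real CARD('n))) *v v) < 1"
    \<comment> \<open>(A2)\<close>
    and smooth: "\<And>i x y. norm (gf i x - gf i y) \<le> L * norm (x - y)"
    and bdd: "\<And>i. bdd_below (range (floc F D i))"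
    \<comment> \<open>(A3)\<close>
    and noise: "\<And>s i (x :: 'w \<Rightarrow> real^'d). x \<in> borel_measurable (filt M D \<xi> s) \<Longrightarrow>
        integrable M (\<lambda>\<omega>. (norm (gF i (x \<omega>) (\<xi> i s \<omega>) - gf i (x \<omega>)))\<^sup>2)
      \<and> (\<forall>j. AE \<omega> in M. real_cond_exp M (filt M D \<xi> s)
                (\<lambda>\<omega>. (gF i (x \<omega>) (\<xi> i s \<omega>) - gf i (x \<omega>)) $ j) \<omega> = 0)
      \<and> (AE \<omega> in M. real_cond_exp M (filt M D \<xi> s)
                (\<lambda>\<omega>. (norm (gF i (x \<omega>) (\<xi> i s \<omega>) - gf i (x \<omega>)))\<^sup>2) \<omega> \<le> \<sigma>\<^sup>2)"
    \<comment> \<open>(A4) PL, with grad f(x) = (1/n) sum_i grad f_i(x)\<close>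
    and \<mu>_pos: "\<mu> > 0"
    and PL: "\<And>x. 2 * \<mu> * (fglob F D x - fstar F D)
                 \<le> (norm ((1 / real CARD('n)) *\<^sub>R (\<Sum>i\<in>UNIV. gf i x)))\<^sup>2"
    \<comment> \<open>step sizes\<close>
    and \<alpha>_pos: "\<alpha> > 0"
    and \<beta>_range: "0 \<le> \<beta>" "\<beta> < 1"
  shows
    "(\<integral>\<omega>. fglob F D (edmz W \<alpha> \<beta> x0 gF (\<lambda>s i. \<xi> i s \<omega>) (Suc t)) - fstar F D \<partial>M)
     \<le> (1 - \<alpha> * \<mu>) * (\<integral>\<omega>. fglob F D (edmz W \<alpha> \<beta> x0 gF (\<lambda>s i. \<xi> i s \<omega>) t) - fstar F D \<partial>M)
       - \<alpha> * (1 - \<alpha> * L) / 2 *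
           (\<integral>\<omega>. (norm ((1 / real CARD('n)) *\<^sub>R
               (\<Sum>i\<in>UNIV. gf i (edmX W \<alpha> \<beta> x0 gF (\<lambda>s i. \<xi> i s \<omega>) t i))))\<^sup>2 \<partial>M)
       + \<alpha> * L\<^sup>2 / (2 * real CARD('n)) *
           (\<integral>\<omega>. (\<Sum>i\<in>UNIV. (norm (edmX W \<alpha> \<beta> x0 gF (\<lambda>s i. \<xi> i s \<omega>) t i
                    - avg (edmX W \<alpha> \<beta> x0 gF (\<lambda>s i. \<xi> i s \<omega>) t)))\<^sup>2) \<partial>M)
       + \<alpha> ^ 3 * L\<^sup>2 * \<beta>\<^sup>2 / (2 * (1 - \<beta>)\<^sup>2) *
           (\<integral>\<omega>. (norm (avg (edmMprev W \<alpha> \<beta> x0 gF (\<lambda>s i. \<xi> i s \<omega>) t)))\<^sup>2 \<partial>M)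
       + \<alpha>\<^sup>2 * L * \<sigma>\<^sup>2 / (2 * real CARD('n))"
proof -
  have column_sums: "(\<Sum>i\<in>UNIV. W $ i $ j) = 1" for j
  proof -
    have "W $ i $ j = W $ j $ i" for i
      using arg_cong[OF W_sym, of "\<lambda>A. A $ i $ j"] by (simp add: transpose_def)
    with W_stoch[of j] show ?thesis by simp
  qed
  interpret edm_setting M F D gf L \<xi> gF W \<alpha> \<beta> \<mu> \<sigma> x0
    using prob \<xi>_meas \<xi>_indep gF_meas f_grad smooth bdd noise PL \<alpha>_pos \<beta>_range column_sums
    by (intro edm_setting.intro smooth_objective.intro edm_setting_axioms.intro) auto
  have "avg (\<lambda>i. gf i (y i)) = (1 / real CARD('n)) *\<^sub>R (\<Sum>i\<in>UNIV. gf i (y i))" for y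
    by (simp add: avg_def)
  with expected_descent[of t] show ?thesis by simp
qed

end
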